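(* In the situation of Theorem 3.2 (finite-dimensional two-step solvable $\mathfrak g=\mathfrak g^\infty\rtimes\mathfrak n$ over a field of characteristic zero, an LR-structure $\cdot$ on $\mathfrak n$ with $\mathfrak n\cdot\mathfrak n\subseteq[\mathfrak n,\mathfrak n]$), one has $\mathfrak n^i\cdot\mathfrak n^j\subseteq\mathfrak n^{i+j}$ for all $i,j\ge1$, and the LR-structure $(a,x)\star(b,y)=([x,b],x\cdot y)$ on $\mathfrak g$ ($a,b\in\mathfrak g^\infty$, $x,y\in\mathfrak n$) is complete.
   Context: Lower central series: $\mathfrak n^1=\mathfrak n$, $\mathfrak n^{i+1}=[\mathfrak n,\mathfrak n^i]$; $\mathfrak g^\infty=\bigcap_i\mathfrak g^i$. An LR-structure on a Lie algebra is a bilinear product $\cdot$ on its underlying space with $x\cdot(y\cdot z)=y\cdot(x\cdot z)$, $(x\cdot y)\cdot z=(x\cdot z)\cdot y$ and $x\cdot y-y\cdot x=[x,y]$; it is complete if all right multiplications $y\mapsto y\cdot x$ are nilpotent. $\mathfrak n$ is a subalgebra complementary to the abelian ideal $\mathfrak g^\infty$. *)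

theory Defs
  imports Main "HOL.Vector_Spaces"
begin

definition lie_algebra :: "('k::field \<Rightarrow> 'v::ab_group_add \<Rightarrow> 'v) \<Rightarrow> ('v \<Rightarrow> 'v \<Rightarrow> 'v) \<Rightarrow> bool" where
  "lie_algebra sc br \<longleftrightarrow> vector_space sc
     \<and> (\<forall>x y z. br (x + y) z = br x z + br y z)
     \<and> (\<forall>x y z. br x (y + z) = br x y + br x z)
     \<and> (\<forall>c x y. br (sc c x) y = sc c (br x y))
     \<and> (\<forall>c x y. br x (sc c y) = sc c (br x y))
     \<and> (\<forall>x. br x x = 0)
     \<and> (\<forall>x y z. br x (br y z) + br y (br z x) + br z (br x y) = 0)"

definition fin_dim :: "('k::field \<Rightarrow> 'v::ab_group_add \<Rightarrow> 'v) \<Rightarrow> bool" where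
  "fin_dim sc \<longleftrightarrow> (\<exists>B. finite B \<and> module.span sc B = UNIV)"

definition brk :: "('k::field \<Rightarrow> 'v::ab_group_add \<Rightarrow> 'v) \<Rightarrow> ('v \<Rightarrow> 'v \<Rightarrow> 'v) \<Rightarrow> 'v set \<Rightarrow> 'v set \<Rightarrow> 'v set" where
  "brk sc br A B = module.span sc {br a b | a b. a \<in> A \<and> b \<in> B}"

primrec lcs_aux :: "('k::field \<Rightarrow> 'v::ab_group_add \<Rightarrow> 'v) \<Rightarrow> ('v \<Rightarrow> 'v \<Rightarrow> 'v) \<Rightarrow> 'v set \<Rightarrow> nat \<Rightarrow> 'v set" where
  "lcs_aux sc br S 0 = S"
| "lcs_aux sc br S (Suc i) = brk sc br S (lcs_aux sc br S i)"

text \<open>Lower central series: lcs S 1 = S, lcs S (i+1) = [S, lcs S i] (indices i \<ge> 1).\<close>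
definition lcs :: "('k::field \<Rightarrow> 'v::ab_group_add \<Rightarrow> 'v) \<Rightarrow> ('v \<Rightarrow> 'v \<Rightarrow> 'v) \<Rightarrow> 'v set \<Rightarrow> nat \<Rightarrow> 'v set" where
  "lcs sc br S i = lcs_aux sc br S (i - 1)"

definition ginf :: "('k::field \<Rightarrow> 'v::ab_group_add \<Rightarrow> 'v) \<Rightarrow> ('v \<Rightarrow> 'v \<Rightarrow> 'v) \<Rightarrow> 'v set" where
  "ginf sc br = (\<Inter>i\<in>{1..}. lcs sc br UNIV i)"

definition two_step_solvable :: "('k::field \<Rightarrow> 'v::ab_group_add \<Rightarrow> 'v) \<Rightarrow> ('v \<Rightarrow> 'v \<Rightarrow> 'v) \<Rightarrow> bool" where
  "two_step_solvable sc br \<longleftrightarrow>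
     (\<forall>x\<in>brk sc br UNIV UNIV. \<forall>y\<in>brk sc br UNIV UNIV. br x y = 0)"

definition lie_subalgebra :: "('k::field \<Rightarrow> 'v::ab_group_add \<Rightarrow> 'v) \<Rightarrow> ('v \<Rightarrow> 'v \<Rightarrow> 'v) \<Rightarrow> 'v set \<Rightarrow> bool" where
  "lie_subalgebra sc br N \<longleftrightarrow> module.subspace sc N \<and> (\<forall>x\<in>N. \<forall>y\<in>N. br x y \<in> N)"

definition LR_structure :: "('k::field \<Rightarrow> 'v::ab_group_add \<Rightarrow> 'v) \<Rightarrow> ('v \<Rightarrow> 'v \<Rightarrow> 'v) \<Rightarrow> 'v set \<Rightarrow> ('v \<Rightarrow> 'v \<Rightarrow> 'v) \<Rightarrow> bool" where
  "LR_structure sc br S p \<longleftrightarrow>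
     (\<forall>x\<in>S. \<forall>y\<in>S. p x y \<in> S)
   \<and> (\<forall>x\<in>S. \<forall>y\<in>S. \<forall>z\<in>S. p (x + y) z = p x z + p y z)
   \<and> (\<forall>x\<in>S. \<forall>y\<in>S. \<forall>z\<in>S. p x (y + z) = p x y + p x z)
   \<and> (\<forall>c. \<forall>x\<in>S. \<forall>y\<in>S. p (sc c x) y = sc c (p x y))
   \<and> (\<forall>c. \<forall>x\<in>S. \<forall>y\<in>S. p x (sc c y) = sc c (p x y))
   \<and> (\<forall>x\<in>S. \<forall>y\<in>S. \<forall>z\<in>S. p x (p y z) = p y (p x z))
   \<and> (\<forall>x\<in>S. \<forall>y\<in>S. \<forall>z\<in>S. p (p x y) z = p (p x z) y)
   \<and> (\<forall>x\<in>S. \<forall>y\<in>S. p x y - p y x = br x y)"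

definition complete_LR :: "'v::ab_group_add set \<Rightarrow> ('v \<Rightarrow> 'v \<Rightarrow> 'v) \<Rightarrow> bool" where
  "complete_LR S p \<longleftrightarrow> (\<forall>x\<in>S. \<exists>k. \<forall>y\<in>S. ((\<lambda>u. p u x) ^^ k) y = 0)"

end

theory Submission imports Defs begin

(*
  Left multiplications of an LR-algebra
  are derivations of the bracket, and left multiplication by a bracket is expressed through
  brackets of left multiplications.  Since N^(j+1) is spanned by brackets [a,b] with a \<in> N,
  b \<in> N^j, two nested inductions over the lower central series give first
  N \<cdot> N^j \<subseteq> N^(j+1) and then N^i \<cdot> N^j \<subseteq> N^(i+j); the base case is N\<cdot>N \<subseteq> [N,N].

  Writing v = a + x with a \<in> g^\<infinity>, x \<in> N via linear
  projections, the product (a+x) \<star> (b+y) = [x,b] + x\<cdot>y is a single explicit function sdp.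
  Its LR-identities reduce to those of p plus the vanishing of brackets inside the abelian
  derived algebra [g,g], which contains g^\<infinity> and N\<cdot>N.  For completeness, the N-component
  of the n-th power of a right multiplication lies in N^(n+1); in finite dimension the lower
  central series of g stabilises at g^\<infinity>, so N^K \<subseteq> N \<inter> g^\<infinity> = 0 for some K.
*)

declare lcs_aux.simps(2)[simp del]

lemma (in vector_space) descending_chain_stabilizes:
  fixes V :: "nat \<Rightarrow> 'b set"
  assumes fd: "fin_dim scale"
    and sub: "\<And>i. subspace (V i)"
    and desc: "\<And>i j. i \<le> j \<Longrightarrow> V j \<subseteq> V i"
  shows "\<exists>k. \<forall>i\<ge>k. V i = V k"
proof -
  obtain B where B: "finite B" "span B = UNIV" using fd by (auto simp: fin_dim_def)
  obtain B' where B': "independent B'" "UNIV \<subseteq> span B'"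
    using maximal_independent_subset[of UNIV] by blast
  have "finite B'" using independent_span_bound[OF B(1) B'(1)] B(2) by simp
  then interpret fdv: finite_dimensional_vector_space scale B'
    by unfold_locales (use B' in auto)
  obtain k where k: "\<And>i. dim (V k) \<le> dim (V i)"
    using ex_has_least_nat[of "\<lambda>_. True" 0 "\<lambda>i. dim (V i)"] by auto
  have "V i = V k" if "i \<ge> k" for i
    using fdv.subspace_dim_equal[OF sub sub desc[OF that] k] .
  then show ?thesis by blast
qed

locale lie_alg =
  fixes sc :: "'k::field \<Rightarrow> 'v::ab_group_add \<Rightarrow> 'v"
    and br :: "'v \<Rightarrow> 'v \<Rightarrow> 'v"
  assumes lie: "lie_algebra sc br"
begin

sublocale vector_space sc using lie by (simp add: lie_algebra_def)

lemma br_add_left: "br (x + y) z = br x z + br y z" using lie by (simp add: lie_algebra_def)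
lemma br_add_right: "br x (y + z) = br x y + br x z" using lie by (simp add: lie_algebra_def)
lemma br_scale_left: "br (sc c x) y = sc c (br x y)" using lie by (simp add: lie_algebra_def)
lemma br_scale_right: "br x (sc c y) = sc c (br x y)" using lie by (simp add: lie_algebra_def)
lemma br_self: "br x x = 0" using lie by (simp add: lie_algebra_def)
lemma br_jacobi: "br x (br y z) + br y (br z x) + br z (br x y) = 0"
  using lie by (simp add: lie_algebra_def)

lemma br_zero_left: "br 0 y = 0" using br_add_left[of 0 0 y] by simp
lemma br_zero_right: "br x 0 = 0" using br_add_right[of x 0 0] by simp

lemma br_anticomm: "br y x = - br x y"
proof -
  have "br (x + y) (x + y) = br x x + br x y + (br y x + br y y)"
    by (simp add: br_add_left br_add_right)
  then have "br x y + br y x = 0" by (simp add: br_self)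
  then show ?thesis by (simp add: eq_neg_iff_add_eq_0 add.commute)
qed

lemma br_neg_right: "br x (- y) = - br x y"
  using br_add_right[of x y "- y"] br_zero_right by (simp add: eq_neg_iff_add_eq_0 add.commute)

lemma br_jacobi_left: "br (br a b) c = br a (br b c) + br b (br c a)"
proof -
  have "br (br a b) c + br c (br a b) = 0" using br_anticomm[of "br a b" c] by simp
  then show ?thesis using br_jacobi[of a b c]
    by (metis add.assoc add.commute add_right_cancel add.left_commute add.right_neutral)
qed

(* LCS S i is the (i+1)-st term of the lower central series of S. *)
abbreviation LCS :: "'v set \<Rightarrow> nat \<Rightarrow> 'v set" where
  "LCS S i \<equiv> lcs_aux sc br S i"

lemma LCS_Suc: "LCS S (Suc i) = span {br a b | a b. a \<in> S \<and> b \<in> LCS S i}"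
  by (simp add: brk_def lcs_aux.simps(2))

lemma LCS_gen: "a \<in> S \<Longrightarrow> b \<in> LCS S i \<Longrightarrow> br a b \<in> LCS S (Suc i)"
  unfolding LCS_Suc by (rule span_base) blast

lemma LCS_Suc_induct:
  assumes "x \<in> LCS S (Suc i)" and "subspace (Collect P)"
    and "\<And>a b. a \<in> S \<Longrightarrow> b \<in> LCS S i \<Longrightarrow> P (br a b)"
  shows "P x"
  using assms(1) unfolding LCS_Suc by (rule span_induct) (use assms(2,3) in auto)

lemma LCS_Suc_subspace: "subspace (LCS S (Suc i))"
  unfolding LCS_Suc by (rule subspace_span)

lemma LCS_subspace: "subspace S \<Longrightarrow> subspace (LCS S i)"
  by (cases i) (simp_all add: LCS_Suc_subspace)

lemma LCS_sub: assumes "lie_subalgebra sc br S" shows "LCS S i \<subseteq> S"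
proof (induction i)
  case (Suc i)
  from assms have "subspace S" "\<And>a b. a \<in> S \<Longrightarrow> b \<in> S \<Longrightarrow> br a b \<in> S"
    by (auto simp: lie_subalgebra_def)
  with Suc have "{br a b | a b. a \<in> S \<and> b \<in> LCS S i} \<subseteq> S" by blast
  then show ?case unfolding LCS_Suc using \<open>subspace S\<close> by (rule span_minimal)
qed simp

lemma LCS_antimono:
  assumes "lie_subalgebra sc br S" and "i \<le> j"
  shows "LCS S j \<subseteq> LCS S i"
proof -
  have step: "LCS S (Suc n) \<subseteq> LCS S n" for n
  proof (induction n)
    case 0 show ?case using LCS_sub[OF assms(1)] by simp
  next
    case (Suc n)
    have "LCS S (Suc (Suc n)) = span {br a b | a b. a \<in> S \<and> b \<in> LCS S (Suc n)}"
      by (rule LCS_Suc)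
    also have "\<dots> \<subseteq> span {br a b | a b. a \<in> S \<and> b \<in> LCS S n}"
      by (rule span_mono) (use Suc in blast)
    also have "\<dots> = LCS S (Suc n)" by (rule LCS_Suc[symmetric])
    finally show ?case .
  qed
  show ?thesis by (rule lift_Suc_antimono_le[of "LCS S", OF step assms(2)])
qed

lemma LCS_mono_set: assumes "S \<subseteq> T" shows "LCS S i \<subseteq> LCS T i"
proof (induction i)
  case (Suc i)
  have "{br a b | a b. a \<in> S \<and> b \<in> LCS S i} \<subseteq> {br a b | a b. a \<in> T \<and> b \<in> LCS T i}"
    using Suc assms by blast
  then show ?case unfolding LCS_Suc[of S i] LCS_Suc[of T i] by (rule span_mono)
qed (simp add: assms)

lemma subspace_br_left_preimage:
  assumes W: "\<And>j. subspace (W j)"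
  shows "subspace {x. \<forall>j. \<forall>y\<in>Y j. br x y \<in> W j}" (is "subspace ?T")
proof (rule subspaceI)
  show "0 \<in> ?T" using W subspace_0 by (simp add: br_zero_left)
  show "x + x' \<in> ?T" if "x \<in> ?T" "x' \<in> ?T" for x x'
    using that W subspace_add by (simp add: br_add_left)
  show "sc c x \<in> ?T" if "x \<in> ?T" for c x
    using that W subspace_scale by (simp add: br_scale_left)
qed

lemma LCS_br: "x \<in> LCS S i \<Longrightarrow> y \<in> LCS S j \<Longrightarrow> br x y \<in> LCS S (Suc (i + j))"
proof (induction i arbitrary: x y j)
  case 0 then show ?case using LCS_gen by simp
next
  case (Suc i)
  have "\<forall>j. \<forall>y\<in>LCS S j. br x y \<in> LCS S (Suc (Suc i + j))"
  proof (rule LCS_Suc_induct[OF Suc.prems(1) subspace_br_left_preimage[OF LCS_Suc_subspace]])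
    fix a b assume a: "a \<in> S" and b: "b \<in> LCS S i"
    show "\<forall>j. \<forall>y\<in>LCS S j. br (br a b) y \<in> LCS S (Suc (Suc i + j))"
    proof (intro allI ballI)
      fix j y assume y: "y \<in> LCS S j"
      have "br a (br b y) \<in> LCS S (Suc (Suc i + j))"
        using LCS_gen[OF a Suc.IH[OF b y]] by simp
      moreover have "br y a \<in> LCS S (Suc j)"
        using subspace_neg[OF LCS_Suc_subspace LCS_gen[OF a y]] br_anticomm[of y a] by simp
      then have "br b (br y a) \<in> LCS S (Suc (Suc i + j))" using Suc.IH[OF b] by fastforce
      ultimately show "br (br a b) y \<in> LCS S (Suc (Suc i + j))"
        unfolding br_jacobi_left using LCS_Suc_subspace subspace_add by blast
    qed
  qed
  then show ?case using Suc.prems(2) by blast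
qed

abbreviation G :: "nat \<Rightarrow> 'v set" where "G i \<equiv> LCS UNIV i"

lemma UNIV_subalgebra: "lie_subalgebra sc br UNIV"
  by (simp add: lie_subalgebra_def)

lemma ginf_eq: "ginf sc br = (\<Inter>i. G i)"
proof -
  have "x \<in> G i" if "\<forall>i\<ge>1. x \<in> G (i - 1)" for x i
    using that[rule_format, of "Suc i"] by simp
  then show ?thesis by (auto simp: ginf_def lcs_def)
qed

lemma ginf_subspace: "subspace (ginf sc br)"
  unfolding ginf_eq by (rule subspace_Int) (simp add: LCS_subspace)

lemma ginf_ideal: "c \<in> ginf sc br \<Longrightarrow> br x c \<in> ginf sc br"
  unfolding ginf_eq
proof (intro InterI, clarify)
  fix i assume "c \<in> (\<Inter>i. G i)"
  then show "br x c \<in> G i" using LCS_gen[of x UNIV c] by (cases i) auto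
qed

lemma br_in_derived: "br u v \<in> brk sc br UNIV UNIV"
  unfolding brk_def by (rule span_base) blast

lemma ginf_in_derived: "ginf sc br \<subseteq> brk sc br UNIV UNIV"
  unfolding ginf_eq by (metis INT_lower UNIV_I lcs_aux.simps)

lemma ginf_attained:
  assumes "fin_dim sc"
  shows "\<exists>k. G k = ginf sc br"
proof -
  obtain k where k: "\<And>i. i \<ge> k \<Longrightarrow> G i = G k"
    using descending_chain_stabilizes[where V = G, OF assms LCS_subspace[OF subspace_UNIV]
        LCS_antimono[OF UNIV_subalgebra]] by blast
  have "G k \<subseteq> G i" for i
    using LCS_antimono[OF UNIV_subalgebra, of i k] k[of i] by (cases "i \<le> k") auto
  then show ?thesis unfolding ginf_eq by blast
qed

end

locale LR_alg = lie_alg sc br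
  for sc :: "'k::field \<Rightarrow> 'v::ab_group_add \<Rightarrow> 'v" and br +
  fixes N :: "'v set" and p :: "'v \<Rightarrow> 'v \<Rightarrow> 'v"
  assumes sub: "lie_subalgebra sc br N"
    and LR: "LR_structure sc br N p"
begin

lemma N_subspace: "subspace N" using sub by (simp add: lie_subalgebra_def)
lemma N_br: "x \<in> N \<Longrightarrow> y \<in> N \<Longrightarrow> br x y \<in> N" using sub by (simp add: lie_subalgebra_def)
lemma N_zero: "0 \<in> N" using N_subspace subspace_0 by blast

lemma p_closed: "x \<in> N \<Longrightarrow> y \<in> N \<Longrightarrow> p x y \<in> N"
  using LR by (simp add: LR_structure_def)
lemma p_add_left: "x \<in> N \<Longrightarrow> y \<in> N \<Longrightarrow> z \<in> N \<Longrightarrow> p (x + y) z = p x z + p y z"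
  using LR by (simp add: LR_structure_def)
lemma p_add_right: "x \<in> N \<Longrightarrow> y \<in> N \<Longrightarrow> z \<in> N \<Longrightarrow> p x (y + z) = p x y + p x z"
  using LR by (simp add: LR_structure_def)
lemma p_scale_left: "x \<in> N \<Longrightarrow> y \<in> N \<Longrightarrow> p (sc c x) y = sc c (p x y)"
  using LR by (simp add: LR_structure_def)
lemma p_scale_right: "x \<in> N \<Longrightarrow> y \<in> N \<Longrightarrow> p x (sc c y) = sc c (p x y)"
  using LR by (simp add: LR_structure_def)
lemma p_left_sym: "x \<in> N \<Longrightarrow> y \<in> N \<Longrightarrow> z \<in> N \<Longrightarrow> p x (p y z) = p y (p x z)"
  using LR by (simp add: LR_structure_def)
lemma p_right_sym: "x \<in> N \<Longrightarrow> y \<in> N \<Longrightarrow> z \<in> N \<Longrightarrow> p (p x y) z = p (p x z) y"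
  using LR by (simp add: LR_structure_def)
lemma p_commutator: "x \<in> N \<Longrightarrow> y \<in> N \<Longrightarrow> p x y - p y x = br x y"
  using LR by (simp add: LR_structure_def)

lemma p_zero_left: "y \<in> N \<Longrightarrow> p 0 y = 0" using p_add_left[of 0 0 y] N_zero by simp
lemma p_zero_right: "x \<in> N \<Longrightarrow> p x 0 = 0" using p_add_right[of x 0 0] N_zero by simp

lemma p_diff_left: "x \<in> N \<Longrightarrow> y \<in> N \<Longrightarrow> z \<in> N \<Longrightarrow> p (x - y) z = p x z - p y z"
  using p_add_left[of "x - y" y z] N_subspace subspace_diff by (fastforce simp: algebra_simps)
lemma p_diff_right: "x \<in> N \<Longrightarrow> y \<in> N \<Longrightarrow> z \<in> N \<Longrightarrow> p x (y - z) = p x y - p x z"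
  using p_add_right[of x "y - z" z] N_subspace subspace_diff by (fastforce simp: algebra_simps)

(* Left multiplications are derivations of the Lie bracket (left-symmetry + right-symmetry). *)
lemma p_derivation:
  assumes "x \<in> N" "a \<in> N" "b \<in> N"
  shows "p x (br a b) = br (p x a) b + br a (p x b)"
proof -
  have "p x (br a b) = p x (p a b - p b a)" using assms p_commutator by simp
  also have "\<dots> = p x (p a b) - p x (p b a)" using assms p_diff_right p_closed by simp
  also have "\<dots> = p a (p x b) - p b (p x a)" using assms p_left_sym by simp
  finally have lhs: "p x (br a b) = p a (p x b) - p b (p x a)" .
  have "br (p x a) b = p (p x a) b - p b (p x a)"
    and "br a (p x b) = p a (p x b) - p (p x b) a"
    using assms p_commutator p_closed by simp_all
  moreover have "p (p x a) b = p (p x b) a" using assms p_right_sym by simp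
  ultimately show ?thesis unfolding lhs by (simp add: algebra_simps)
qed

(* Left multiplication by a bracket is the commutator of left multiplications, rewritten. *)
lemma p_bracket_left:
  assumes "a \<in> N" "b \<in> N" "y \<in> N"
  shows "p (br a b) y = br a (p b y) - br b (p a y)"
proof -
  have "p (br a b) y = p (p a b - p b a) y" using assms p_commutator by simp
  also have "\<dots> = p (p a b) y - p (p b a) y" using assms p_diff_left p_closed by simp
  also have "\<dots> = p (p a y) b - p (p b y) a" using assms p_right_sym by simp
  finally have lhs: "p (br a b) y = p (p a y) b - p (p b y) a" .
  have "br a (p b y) = p a (p b y) - p (p b y) a"
    and "br b (p a y) = p b (p a y) - p (p a y) b"
    using assms p_commutator p_closed by simp_all
  moreover have "p a (p b y) = p b (p a y)" using assms p_left_sym by simp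
  ultimately show ?thesis unfolding lhs by (simp add: algebra_simps)
qed

lemma LCS_N_sub: "LCS N i \<subseteq> N" using LCS_sub[OF sub] .

lemma LCS_N_subspace: "subspace (LCS N i)" using LCS_subspace[OF N_subspace] .

lemma subspace_p_left_preimage:
  assumes Y: "\<And>j. Y j \<subseteq> N" and W: "\<And>j. subspace (W j)"
  shows "subspace {x. x \<in> N \<and> (\<forall>j. \<forall>y\<in>Y j. p x y \<in> W j)}" (is "subspace ?T")
proof (rule subspaceI)
  have "p 0 y \<in> W j" if "y \<in> Y j" for j y
    using p_zero_left[of y] subspace_0[OF W[of j]] that Y[of j] by (simp add: subset_iff)
  then show "0 \<in> ?T" using N_zero by simp
  show "x + x' \<in> ?T" if x: "x \<in> ?T" and x': "x' \<in> ?T" for x x'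
  proof -
    have "p (x + x') y \<in> W j" if y: "y \<in> Y j" for j y
    proof -
      have "y \<in> N" using y Y[of j] by blast
      then have "p (x + x') y = p x y + p x' y" using x x' p_add_left by simp
      then show ?thesis using x x' y subspace_add[OF W[of j]] by simp
    qed
    then show ?thesis using x x' subspace_add[OF N_subspace, of x x'] by simp
  qed
  show "sc c x \<in> ?T" if x: "x \<in> ?T" for c x
  proof -
    have "p (sc c x) y \<in> W j" if y: "y \<in> Y j" for j y
    proof -
      have "y \<in> N" using y Y[of j] by blast
      then have "p (sc c x) y = sc c (p x y)" using x p_scale_left by simp
      then show ?thesis using x y subspace_scale[OF W[of j]] by simp
    qed
    then show ?thesis using x subspace_scale[OF N_subspace, of x c] by simp
  qed
qed

lemma subspace_p_right_preimage:
  assumes W: "subspace W"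
  shows "subspace {y. y \<in> N \<and> (\<forall>x\<in>N. p x y \<in> W)}" (is "subspace ?T")
proof (rule subspaceI)
  show "0 \<in> ?T" using N_zero p_zero_right subspace_0[OF W] by simp
  show "y + y' \<in> ?T" if y: "y \<in> ?T" and y': "y' \<in> ?T" for y y'
  proof -
    have "p x (y + y') = p x y + p x y'" if "x \<in> N" for x using y y' that p_add_right by simp
    then show ?thesis using y y' subspace_add[OF W] subspace_add[OF N_subspace, of y y'] by simp
  qed
  show "sc c y \<in> ?T" if y: "y \<in> ?T" for c y
  proof -
    have "p x (sc c y) = sc c (p x y)" if "x \<in> N" for x using y that p_scale_right by simp
    then show ?thesis using y subspace_scale[OF W] subspace_scale[OF N_subspace, of y c] by simp
  qed
qed

end

locale LR_into_derived = LR_alg sc br N p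
  for sc :: "'k::field \<Rightarrow> 'v::ab_group_add \<Rightarrow> 'v" and br N p +
  assumes NN: "\<forall>x\<in>N. \<forall>y\<in>N. p x y \<in> brk sc br N N"
begin

(* Part 1, first induction: N \<cdot> N^(j+1) \<subseteq> N^(j+2), using that left multiplications
   are derivations. *)
lemma mult_N_N: "x \<in> N \<Longrightarrow> y \<in> N \<Longrightarrow> p x y \<in> LCS N (Suc 0)"
  using NN by (simp add: lcs_aux.simps(2))

lemma mult_N_LCS: "x \<in> N \<Longrightarrow> y \<in> LCS N j \<Longrightarrow> p x y \<in> LCS N (Suc j)"
proof (induction j arbitrary: x y)
  case 0 then show ?case using mult_N_N by simp
next
  case (Suc j)
  have "y \<in> N \<and> (\<forall>x\<in>N. p x y \<in> LCS N (Suc (Suc j)))"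
  proof (rule LCS_Suc_induct[OF Suc.prems(2) subspace_p_right_preimage[OF LCS_N_subspace]])
    fix a b assume a: "a \<in> N" and b: "b \<in> LCS N j"
    have bN: "b \<in> N" using b LCS_N_sub by blast
    have "p x (br a b) \<in> LCS N (Suc (Suc j))" if x: "x \<in> N" for x
    proof -
      have "br (p x a) b \<in> LCS N (Suc (Suc j))"
        using LCS_br[OF mult_N_N[OF x a] b] by simp
      moreover have "br a (p x b) \<in> LCS N (Suc (Suc j))" using LCS_gen[OF a Suc.IH[OF x b]] .
      ultimately show ?thesis
        unfolding p_derivation[OF x a bN] using LCS_N_subspace subspace_add by blast
    qed
    then show "br a b \<in> N \<and> (\<forall>x\<in>N. p x (br a b) \<in> LCS N (Suc (Suc j)))"
      using N_br a bN by blast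
  qed
  then show ?case using Suc.prems(1) by blast
qed

(* Part 1, second induction: N^(i+1) \<cdot> N^(j+1) \<subseteq> N^(i+j+2), via p_bracket_left. *)
lemma mult_LCS_LCS: "x \<in> LCS N i \<Longrightarrow> y \<in> LCS N j \<Longrightarrow> p x y \<in> LCS N (Suc (i + j))"
proof (induction i arbitrary: x y j)
  case 0 then show ?case using mult_N_LCS by simp
next
  case (Suc i)
  have "x \<in> N \<and> (\<forall>j. \<forall>y\<in>LCS N j. p x y \<in> LCS N (Suc (Suc i + j)))"
  proof (rule LCS_Suc_induct[OF Suc.prems(1)
        subspace_p_left_preimage[OF LCS_N_sub LCS_N_subspace]])
    fix a b assume a: "a \<in> N" and b: "b \<in> LCS N i"
    have bN: "b \<in> N" using b LCS_N_sub by blast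
    have "p (br a b) y \<in> LCS N (Suc (Suc i + j))" if y: "y \<in> LCS N j" for j y
    proof -
      have yN: "y \<in> N" using y LCS_N_sub by blast
      have "br a (p b y) \<in> LCS N (Suc (Suc i + j))" using LCS_gen[OF a Suc.IH[OF b y]] by simp
      moreover have "br b (p a y) \<in> LCS N (Suc (Suc i + j))"
        using LCS_br[OF b mult_N_LCS[OF a y]] by simp
      ultimately show ?thesis
        unfolding p_bracket_left[OF a bN yN] using LCS_N_subspace subspace_diff by blast
    qed
    then show "br a b \<in> N \<and> (\<forall>j. \<forall>y\<in>LCS N j. p (br a b) y \<in> LCS N (Suc (Suc i + j)))"
      using N_br a bN by blast
  qed
  then show ?case using Suc.prems(2) by blast
qed

lemma lcs_mult_filtration:
  "\<forall>i\<ge>1. \<forall>j\<ge>1. \<forall>x\<in>lcs sc br N i. \<forall>y\<in>lcs sc br N j. p x y \<in> lcs sc br N (i + j)"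
proof (intro allI impI ballI)
  fix i j x y assume "1 \<le> i" "1 \<le> j" "x \<in> lcs sc br N i" "y \<in> lcs sc br N j"
  moreover have "Suc ((i - 1) + (j - 1)) = i + j - 1" using \<open>1 \<le> i\<close> \<open>1 \<le> j\<close> by simp
  ultimately show "p x y \<in> lcs sc br N (i + j)"
    using mult_LCS_LCS unfolding lcs_def by metis
qed

end

locale semidirect_setting = LR_into_derived sc br N p
  for sc :: "'k::field \<Rightarrow> 'v::ab_group_add \<Rightarrow> 'v" and br N p +
  assumes fd: "fin_dim sc"
    and solv: "two_step_solvable sc br"
    and compl_int: "N \<inter> ginf sc br = {0}"
    and compl_sum: "\<forall>v. \<exists>a\<in>ginf sc br. \<exists>x\<in>N. v = a + x"
begin

(* The lower central series of N terminates, since N^(k+1) \<subseteq> N \<inter> g^(k+1) = N \<inter> g^\<infinity>. *)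
lemma LCS_N_vanishes: "\<exists>K. LCS N K = {0}"
proof -
  obtain k where k: "G k = ginf sc br" using ginf_attained[OF fd] by blast
  have "LCS N k \<subseteq> N \<inter> ginf sc br"
    using LCS_mono_set[OF subset_UNIV, of N k] LCS_N_sub[of k] unfolding k by blast
  then have "LCS N k \<subseteq> {0}" using compl_int by simp
  then show ?thesis using subspace_0[OF LCS_N_subspace[of k]] by blast
qed

lemma derived_abelian: "u \<in> brk sc br UNIV UNIV \<Longrightarrow> v \<in> brk sc br UNIV UNIV \<Longrightarrow> br u v = 0"
  using solv by (simp add: two_step_solvable_def)

lemma p_in_derived:
  assumes "x \<in> N" "y \<in> N"
  shows "p x y \<in> brk sc br UNIV UNIV"
proof -
  have "brk sc br N N \<subseteq> brk sc br UNIV UNIV" unfolding brk_def by (rule span_mono) blast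
  then show ?thesis using NN assms by blast
qed

lemma decomp_unique:
  assumes "a \<in> ginf sc br" "a' \<in> ginf sc br" "x \<in> N" "x' \<in> N" "a + x = a' + x'"
  shows "a = a'" "x = x'"
proof -
  have d: "a - a' = x' - x" using assms(5) by (simp add: algebra_simps)
  have "a - a' \<in> ginf sc br" using subspace_diff[OF ginf_subspace assms(1,2)] .
  moreover have "a - a' \<in> N" unfolding d using subspace_diff[OF N_subspace assms(4,3)] .
  ultimately have "a - a' = 0" using compl_int by blast
  then show "a = a'" "x = x'" using d by simp_all
qed

definition gpart :: "'v \<Rightarrow> 'v" where
  "gpart v = (SOME a. a \<in> ginf sc br \<and> v - a \<in> N)"

definition npart :: "'v \<Rightarrow> 'v" where
  "npart v = v - gpart v"

lemma gpart_npart: "gpart v \<in> ginf sc br" "npart v \<in> N" "gpart v + npart v = v"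
proof -
  obtain a x where "a \<in> ginf sc br" "x \<in> N" "v = a + x" using compl_sum by blast
  then have "\<exists>a. a \<in> ginf sc br \<and> v - a \<in> N" by force
  then have "gpart v \<in> ginf sc br \<and> v - gpart v \<in> N" unfolding gpart_def by (rule someI_ex)
  then show "gpart v \<in> ginf sc br" "npart v \<in> N" unfolding npart_def by simp_all
  show "gpart v + npart v = v" by (simp add: npart_def)
qed

lemma parts_of_sum:
  assumes "a \<in> ginf sc br" "x \<in> N"
  shows "gpart (a + x) = a" "npart (a + x) = x"
  using decomp_unique[OF gpart_npart(1) assms(1) gpart_npart(2) assms(2) gpart_npart(3)] .

lemma parts_add: "gpart (u + v) = gpart u + gpart v" "npart (u + v) = npart u + npart v"
proof -
  have "u + v = (gpart u + gpart v) + (npart u + npart v)"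
    using gpart_npart(3)[of u] gpart_npart(3)[of v] by (simp add: algebra_simps)
  moreover have "gpart u + gpart v \<in> ginf sc br" "npart u + npart v \<in> N"
    using subspace_add[OF ginf_subspace gpart_npart(1) gpart_npart(1)]
      subspace_add[OF N_subspace gpart_npart(2) gpart_npart(2)] .
  ultimately show "gpart (u + v) = gpart u + gpart v" "npart (u + v) = npart u + npart v"
    using parts_of_sum by simp_all
qed

lemma parts_scale: "gpart (sc c u) = sc c (gpart u)" "npart (sc c u) = sc c (npart u)"
proof -
  have "sc c u = sc c (gpart u) + sc c (npart u)"
    using gpart_npart(3)[of u] scale_right_distrib[of c "gpart u" "npart u"] by simp
  moreover have "sc c (gpart u) \<in> ginf sc br" "sc c (npart u) \<in> N"
    using subspace_scale[OF ginf_subspace gpart_npart(1)]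
      subspace_scale[OF N_subspace gpart_npart(2)] .
  ultimately show "gpart (sc c u) = sc c (gpart u)" "npart (sc c u) = sc c (npart u)"
    using parts_of_sum by simp_all
qed

(* The semidirect product (a + x) \<star> (b + y) = [x, b] + x\<cdot>y, written via the projections. *)
definition sdp :: "'v \<Rightarrow> 'v \<Rightarrow> 'v" where
  "sdp u v = br (npart u) (gpart v) + p (npart u) (npart v)"

(* Components of a product: the g^\<infinity>-part is [x,b] (as g^\<infinity> is an ideal), the N-part x\<cdot>y. *)
lemma parts_sdp: "gpart (sdp u v) = br (npart u) (gpart v)" "npart (sdp u v) = p (npart u) (npart v)"
  unfolding sdp_def
  using parts_of_sum[OF ginf_ideal[OF gpart_npart(1)] p_closed[OF gpart_npart(2) gpart_npart(2)]]
  by simp_all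

lemma star_eq_sdp:
  assumes "\<forall>a\<in>ginf sc br. \<forall>b\<in>ginf sc br. \<forall>x\<in>N. \<forall>y\<in>N. star (a + x) (b + y) = br x b + p x y"
  shows "star = sdp"
proof (intro ext)
  fix u v
  have "star (gpart u + npart u) (gpart v + npart v) = sdp u v"
    unfolding sdp_def by (rule assms[rule_format, OF gpart_npart(1) gpart_npart(1,2,2)])
  then show "star u v = sdp u v" by (simp add: gpart_npart(3))
qed

lemma gpart_in_derived: "gpart v \<in> brk sc br UNIV UNIV"
  using ginf_in_derived gpart_npart(1) by blast

lemma sdp_nested_right:
  "sdp u (sdp v w) = br (npart u) (br (npart v) (gpart w)) + p (npart u) (p (npart v) (npart w))"
  by (simp only: sdp_def[of u "sdp v w"] parts_sdp)

lemma sdp_nested_left: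
  "sdp (sdp u v) w = br (p (npart u) (npart v)) (gpart w) + p (p (npart u) (npart v)) (npart w)"
  by (simp only: sdp_def[of "sdp u v" w] parts_sdp)

(* Left-symmetry: the bracket part reduces to Jacobi with [[x,y],c] = 0 in the abelian [g,g]. *)
lemma sdp_left_sym: "sdp u (sdp v w) = sdp v (sdp u w)"
proof -
  let ?x = "npart u" and ?y = "npart v" and ?c = "gpart w"
  have xyN: "?x \<in> N" "?y \<in> N" "npart w \<in> N" using gpart_npart by blast+
  have "br (br ?x ?y) ?c = 0"
    using derived_abelian[OF br_in_derived gpart_in_derived] .
  then have "br ?x (br ?y ?c) = br ?y (br ?x ?c)"
    using br_jacobi_left[of ?x ?y ?c] br_anticomm[of ?c ?x] br_neg_right by simp
  then show ?thesis unfolding sdp_nested_right using p_left_sym[OF xyN] by simp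
qed

(* Right-symmetry: the bracket parts vanish since x\<cdot>y \<in> [g,g] and c \<in> g^\<infinity> \<subseteq> [g,g]. *)
lemma sdp_right_sym: "sdp (sdp u v) w = sdp (sdp u w) v"
proof -
  have "br (p (npart u) (npart v)) (gpart w) = 0" "br (p (npart u) (npart w)) (gpart v) = 0"
    using derived_abelian[OF p_in_derived[OF gpart_npart(2) gpart_npart(2)] gpart_in_derived]
    by simp_all
  then show ?thesis unfolding sdp_nested_left using p_right_sym gpart_npart by simp
qed

(* The commutator of sdp is the Lie bracket; [a,b] = 0 for a, b \<in> g^\<infinity>. *)
lemma sdp_commutator: "sdp u v - sdp v u = br u v"
proof -
  have "br u v = br (gpart u + npart u) (gpart v + npart v)" by (simp only: gpart_npart(3))
  also have "\<dots> = br (gpart u) (gpart v) + br (gpart u) (npart v)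
                    + (br (npart u) (gpart v) + br (npart u) (npart v))"
    by (simp add: br_add_left br_add_right)
  also have "\<dots> = br (npart u) (gpart v) - br (npart v) (gpart u) + br (npart u) (npart v)"
    using derived_abelian[OF gpart_in_derived gpart_in_derived, of u v]
      br_anticomm[of "gpart u" "npart v"] by (simp add: algebra_simps)
  finally show ?thesis
    unfolding sdp_def using p_commutator[OF gpart_npart(2) gpart_npart(2), of u v]
    by (simp add: algebra_simps)
qed

lemma sdp_bilinear:
  "sdp (u + v) w = sdp u w + sdp v w" "sdp u (v + w) = sdp u v + sdp u w"
  "sdp (sc c u) v = sc c (sdp u v)" "sdp u (sc c v) = sc c (sdp u v)"
  by (simp_all add: sdp_def parts_add parts_scale gpart_npart br_add_left br_add_right
      br_scale_left br_scale_right p_add_left p_add_right p_scale_left p_scale_right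
      scale_right_distrib algebra_simps)

lemma sdp_LR: "LR_structure sc br UNIV sdp"
  unfolding LR_structure_def
  by (simp add: sdp_bilinear sdp_left_sym sdp_right_sym sdp_commutator)

lemma npart_right_power: "npart (((\<lambda>u. sdp u w) ^^ n) u) \<in> LCS N n"
proof (induction n)
  case 0 show ?case using gpart_npart by simp
next
  case (Suc n)
  have "npart (((\<lambda>u. sdp u w) ^^ Suc n) u) = p (npart (((\<lambda>u. sdp u w) ^^ n) u)) (npart w)"
    by (simp add: parts_sdp)
  also have "\<dots> \<in> LCS N (Suc (n + 0))"
    by (rule mult_LCS_LCS[OF Suc]) (simp add: gpart_npart(2))
  finally show ?case by simp
qed

(* Right multiplications are nilpotent: R_w^(K+1) = 0 once N^(K+1) = 0. *)
lemma sdp_complete: "complete_LR UNIV sdp"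
  unfolding complete_LR_def
proof
  fix w
  obtain K where K: "LCS N K = {0}" using LCS_N_vanishes by blast
  have "((\<lambda>u. sdp u w) ^^ Suc K) u = 0" for u
  proof -
    have "npart (((\<lambda>u. sdp u w) ^^ K) u) = 0"
      using npart_right_power[where w = w and n = K and u = u] K by blast
    then show ?thesis by (simp add: sdp_def br_zero_left p_zero_left[OF gpart_npart(2)])
  qed
  then show "\<exists>k. \<forall>u\<in>UNIV. ((\<lambda>u. sdp u w) ^^ k) u = 0" by blast
qed

end

theorem mainTheorem12:
  fixes sc :: "'k::field_char_0 \<Rightarrow> 'v::ab_group_add \<Rightarrow> 'v"
    and br :: "'v \<Rightarrow> 'v \<Rightarrow> 'v"
    and N :: "'v set"
    and p :: "'v \<Rightarrow> 'v \<Rightarrow> 'v"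
  assumes lie: "lie_algebra sc br"
    and fd: "fin_dim sc"
    and solv: "two_step_solvable sc br"
    and sub: "lie_subalgebra sc br N"
    and compl_int: "N \<inter> ginf sc br = {0}"
    and compl_sum: "\<forall>v. \<exists>a\<in>ginf sc br. \<exists>x\<in>N. v = a + x"
    and LR: "LR_structure sc br N p"
    and NN: "\<forall>x\<in>N. \<forall>y\<in>N. p x y \<in> brk sc br N N"
  shows "(\<forall>i\<ge>1. \<forall>j\<ge>1. \<forall>x\<in>lcs sc br N i. \<forall>y\<in>lcs sc br N j. p x y \<in> lcs sc br N (i + j))
    \<and> (\<forall>star. (\<forall>a\<in>ginf sc br. \<forall>b\<in>ginf sc br. \<forall>x\<in>N. \<forall>y\<in>N.
                  star (a + x) (b + y) = br x b + p x y)
             \<longrightarrow> LR_structure sc br UNIV star \<and> complete_LR UNIV star)"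
proof -
  interpret semidirect_setting sc br N p
    by unfold_locales (fact lie sub LR NN fd solv compl_int compl_sum)+
  show ?thesis
  proof (rule conjI[OF lcs_mult_filtration], intro allI impI)
    fix star :: "'v \<Rightarrow> 'v \<Rightarrow> 'v"
    assume "\<forall>a\<in>ginf sc br. \<forall>b\<in>ginf sc br. \<forall>x\<in>N. \<forall>y\<in>N. star (a + x) (b + y) = br x b + p x y"
    then have "star = sdp" by (rule star_eq_sdp)
    then show "LR_structure sc br UNIV star \<and> complete_LR UNIV star"
      using sdp_LR sdp_complete by simp
  qed
qed

end
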